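(* Let $N$ be an Orlicz function with $N(1)=1$ satisfying the $\Delta_2$-condition at zero, i.e. $\limsup_{u\to0}N(2u)/N(u)<\infty$. Let $U_N$ be the Banach sequence lattice of real sequences $a$ with $$\|a\|_{U_N}=\inf\Big\{u>0:\sum_{k=1}^\infty2^{k-1}N\Big(\frac{|a_k|}{u}\Big)\le1\Big\}<\infty.$$ Then $\|a\|_{l_N}\asymp\|\sum_{k=0}^\infty a^*_{2^k}e_{k+1}\|_{U_N}$ (more precisely $\|a\|_{l_N}\le\|\sum_{k\ge0}a^*_{2^k}e_{k+1}\|_{U_N}\le4\|a\|_{l_N}$), and $E_{l_N}=U_N$ with equivalent norms.
   Context: An Orlicz function is an increasing convex continuous function $N$ on $[0,\infty)$ with $N(0)=0$ and $\lim_{t\to\infty}N(t)=\infty$. The Orlicz sequence space $l_N$ consists of real sequences $a$ with $\|a\|_{l_N}=\inf\{u>0:\sum_kN(|a_k|/u)\le1\}<\infty$. $a^*$ is the nonincreasing rearrangement of $(|a_k|)$. For a symmetric sequence space $X$, $E_X$ is the Banach sequence lattice of real sequences $a$ with $\|a\|_{E_X}:=\|\sum_{k=1}^\infty a_k\sum_{i=2^{k-1}}^{2^k-1}e_i\|_X<\infty$. *)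

theory Defs
  imports "HOL-Analysis.Analysis"
begin

text \<open>Sequences are functions nat => real, indexed from 0: the paper's a_k is a (k-1).\<close>

definition orlicz_function :: "(real \<Rightarrow> real) \<Rightarrow> bool" where
  "orlicz_function N \<longleftrightarrow> mono_on {0..} N \<and> convex_on {0..} N \<and> continuous_on {0..} N
     \<and> N 0 = 0 \<and> filterlim N at_top at_top"

text \<open>Delta_2 at zero: limsup_{u->0+} N(2u)/N(u) < infinity (N positive on (0,inf) so the ratio makes sense).\<close>
definition delta2_zero :: "(real \<Rightarrow> real) \<Rightarrow> bool" where
  "delta2_zero N \<longleftrightarrow> (\<forall>u>0. N u > 0) \<and>
     Limsup (at_right 0) (\<lambda>u. ereal (N (2 * u) / N u)) < \<infinity>"

text \<open>Orlicz sequence norm (value \<infinity> = sequence not in l_N).\<close>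
definition lN_norm :: "(real \<Rightarrow> real) \<Rightarrow> (nat \<Rightarrow> real) \<Rightarrow> ennreal" where
  "lN_norm N a = Inf {ennreal u | u. u > 0 \<and> (\<Sum>k. ennreal (N (\<bar>a k\<bar> / u))) \<le> 1}"

text \<open>U_N norm: sum_{k>=1} 2^(k-1) N(|a_k|/u), i.e. sum_{j>=0} 2^j N(|a j|/u).\<close>
definition UN_norm :: "(real \<Rightarrow> real) \<Rightarrow> (nat \<Rightarrow> real) \<Rightarrow> ennreal" where
  "UN_norm N a = Inf {ennreal u | u. u > 0 \<and> (\<Sum>j. ennreal (2 ^ j * N (\<bar>a j\<bar> / u))) \<le> 1}"

text \<open>Nonincreasing rearrangement, paper indexing n >= 1:
  a*_n = inf {t >= 0 : #{k : |a_k| > t} < n}.\<close>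
definition rearr :: "(nat \<Rightarrow> real) \<Rightarrow> nat \<Rightarrow> real" where
  "rearr a n = Inf {t. t \<ge> 0 \<and> finite {k. \<bar>a k\<bar> > t} \<and> card {k. \<bar>a k\<bar> > t} < n}"

text \<open>Block index: paper position i = m+1 lies in block k with 2^(k-1) <= i < 2^k; returns k-1.\<close>
definition blk :: "nat \<Rightarrow> nat" where
  "blk m = (THE j. 2 ^ j \<le> m + 1 \<and> m + 1 < 2 ^ (j + 1))"

text \<open>Norm of E_{l_N}: || sum_k a_k sum_{i=2^(k-1)}^{2^k-1} e_i ||_{l_N}.\<close>
definition E_lN_norm :: "(real \<Rightarrow> real) \<Rightarrow> (nat \<Rightarrow> real) \<Rightarrow> ennreal" where
  "E_lN_norm N a = lN_norm N (\<lambda>m. a (blk m))"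

end

theory Submission
  imports Defs
begin

(* The l_N modular of a only depends on its nonincreasing rearrangement a*, and grouping a*
   into dyadic blocks [2^j, 2^(j+1)) gives the Cauchy condensation bounds
   sum_n phi(a*_n) <= sum_j 2^j phi(a*_(2^j)) <= 2 sum_n phi(a*_n) for every monotone phi.
   By convexity of N the factor 2 is absorbed by dilating u by 2, so the U_N norm of
   (a*_(2^j)) lies between the l_N norm of a and twice it.  The l_N modular of the block
   sequence sum_k a_k (e_(2^(k-1)) + ... + e_(2^k - 1)) is literally the U_N modular of a,
   so E_(l_N) = U_N isometrically.  The Delta_2 condition enters only through positivity
   of N, which makes the level sets of a sequence with finite modular finite. *)

lemma rearr_le:
  assumes "t \<ge> 0" "finite {k. \<bar>a k\<bar> > t}" "card {k. \<bar>a k\<bar> > t} < n"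
  shows "rearr a n \<le> t"
  unfolding rearr_def using assms by (intro cInf_lower bdd_belowI[of _ 0]) auto

lemma rearr_set_nonempty:
  fixes a :: "nat \<Rightarrow> real"
  assumes "bounded (range a)" "n \<ge> 1"
  shows "{t. t \<ge> 0 \<and> finite {k. \<bar>a k\<bar> > t} \<and> card {k. \<bar>a k\<bar> > t} < n} \<noteq> {}"
proof -
  obtain B where "\<And>k. \<bar>a k\<bar> \<le> B" using assms(1) unfolding bounded_iff by auto
  then have empty: "{k. \<bar>a k\<bar> > max B 0} = {}" by (auto simp: not_less intro: order_trans)
  have "max B 0 \<in> {t. t \<ge> 0 \<and> finite {k. \<bar>a k\<bar> > t} \<and> card {k. \<bar>a k\<bar> > t} < n}"
    unfolding mem_Collect_eq empty using assms(2) by simp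
  then show ?thesis by blast
qed

lemma rearr_nonneg:
  assumes "bounded (range a)" "n \<ge> 1"
  shows "0 \<le> rearr a n"
  unfolding rearr_def using rearr_set_nonempty[OF assms] by (intro cInf_greatest) auto

lemma rearr_antimono:
  assumes "bounded (range a)" "1 \<le> m" "m \<le> n"
  shows "rearr a n \<le> rearr a m"
  unfolding rearr_def using rearr_set_nonempty[OF assms(1,2)] assms(3)
  by (intro cInf_superset_mono bdd_belowI[of _ 0]) auto

lemma rearr_lessE:
  assumes "bounded (range a)" "n \<ge> 1" "rearr a n < v"
  obtains t where "t < v" "finite {k. \<bar>a k\<bar> > t}" "card {k. \<bar>a k\<bar> > t} < n"
  using cInf_lessD[OF rearr_set_nonempty[OF assms(1,2)]] assms(3) unfolding rearr_def by blast

lemma le_rearr_card: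
  assumes "bounded (range a)" "finite F" "F \<noteq> {}" "\<And>k. k \<in> F \<Longrightarrow> v \<le> \<bar>a k\<bar>"
  shows "v \<le> rearr a (card F)"
proof (rule ccontr)
  assume "\<not> v \<le> rearr a (card F)"
  moreover have "card F \<ge> 1" using assms(2,3) by (simp add: Suc_le_eq card_gt_0_iff)
  ultimately obtain t where t: "t < v" "finite {k. \<bar>a k\<bar> > t}" "card {k. \<bar>a k\<bar> > t} < card F"
    using rearr_lessE[OF assms(1)] not_le by blast
  have "F \<subseteq> {k. \<bar>a k\<bar> > t}" using assms(4) t(1) by force
  then show False using card_mono[OF t(2)] t(3) by (simp add: not_le[symmetric])
qed

lemma sum_le_sum_rearr:
  fixes \<phi> :: "real \<Rightarrow> 'b::ordered_comm_monoid_add"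
  assumes mono: "mono_on {0..} \<phi>" and bd: "bounded (range a)" and "finite F"
  shows "(\<Sum>k\<in>F. \<phi> \<bar>a k\<bar>) \<le> (\<Sum>i=1..card F. \<phi> (rearr a i))"
  using \<open>finite F\<close>
proof (induction "card F" arbitrary: F)
  case 0
  then show ?case by simp
next
  case (Suc n)
  then have "F \<noteq> {}" by auto
  then obtain m where m: "m \<in> F" "\<And>k. k \<in> F \<Longrightarrow> \<bar>a m\<bar> \<le> \<bar>a k\<bar>"
    using ex_is_arg_min_if_finite[OF Suc.prems, of "\<lambda>k. \<bar>a k\<bar>"]
    by (auto simp: is_arg_min_linorder)
  have "\<bar>a m\<bar> \<le> rearr a (card F)"
    using le_rearr_card[OF bd Suc.prems \<open>F \<noteq> {}\<close>] m(2) .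
  then have "\<phi> \<bar>a m\<bar> \<le> \<phi> (rearr a (Suc n))"
    using Suc.hyps(2) by (intro mono_onD[OF mono]) auto
  moreover have "(\<Sum>k\<in>F - {m}. \<phi> \<bar>a k\<bar>) \<le> (\<Sum>i=1..n. \<phi> (rearr a i))"
    using Suc m by (metis card_Diff_singleton diff_Suc_1 finite_Diff)
  ultimately show ?case
    using Suc.prems m(1) unfolding Suc.hyps(2)[symmetric]
    by (simp add: sum.remove add_mono add.commute)
qed

lemma ex_max_abs_outside_finite:
  fixes a :: "nat \<Rightarrow> real"
  assumes "finite F" and levels: "\<And>t. t > 0 \<Longrightarrow> finite {k. \<bar>a k\<bar> > t}"
  shows "\<exists>k. k \<notin> F \<and> (\<forall>j. j \<notin> F \<longrightarrow> \<bar>a j\<bar> \<le> \<bar>a k\<bar>)"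
proof (cases "\<exists>j. j \<notin> F \<and> \<bar>a j\<bar> > 0")
  case True
  then obtain j where j: "j \<notin> F" "\<bar>a j\<bar> > 0" by auto
  define G where "G = {k. \<bar>a k\<bar> \<ge> \<bar>a j\<bar>} - F"
  have "G \<subseteq> {k. \<bar>a k\<bar> > \<bar>a j\<bar> / 2}" unfolding G_def using j by auto
  then have "finite G" using levels[of "\<bar>a j\<bar> / 2"] j(2) by (auto intro: finite_subset)
  moreover have "j \<in> G" unfolding G_def using j by auto
  ultimately have "Max ((\<lambda>i. \<bar>a i\<bar>) ` G) \<in> (\<lambda>i. \<bar>a i\<bar>) ` G" by (intro Max_in) auto
  then obtain k where k: "k \<in> G" "\<bar>a k\<bar> = Max ((\<lambda>i. \<bar>a i\<bar>) ` G)" by auto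
  have "\<bar>a i\<bar> \<le> \<bar>a k\<bar>" if "i \<notin> F" for i
  proof (cases "i \<in> G")
    case True
    then show ?thesis using k(2) \<open>finite G\<close> by simp
  next
    case False
    then have "\<bar>a i\<bar> < \<bar>a j\<bar>" using that unfolding G_def by auto
    also have "\<bar>a j\<bar> \<le> \<bar>a k\<bar>" using k(2) \<open>finite G\<close> \<open>j \<in> G\<close> by simp
    finally show ?thesis by simp
  qed
  then show ?thesis using k(1) unfolding G_def by auto
next
  case False
  obtain k where "k \<notin> F" using ex_new_if_finite[OF infinite_UNIV_nat assms(1)] by auto
  then show ?thesis using False by (intro exI[of _ k]) auto
qed

lemma ex_sum_rearr_le_sum:
  fixes \<phi> :: "real \<Rightarrow> 'b::ordered_comm_monoid_add"
  assumes mono: "mono_on {0..} \<phi>" and bd: "bounded (range a)"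
    and levels: "\<And>t. t > 0 \<Longrightarrow> finite {k. \<bar>a k\<bar> > t}"
  shows "\<exists>F. finite F \<and> card F = n \<and> (\<Sum>i=1..n. \<phi> (rearr a i)) \<le> (\<Sum>k\<in>F. \<phi> \<bar>a k\<bar>)"
proof (induction n)
  case 0
  then show ?case by (intro exI[of _ "{}"]) auto
next
  case (Suc n)
  then obtain F where F: "finite F" "card F = n"
    "(\<Sum>i=1..n. \<phi> (rearr a i)) \<le> (\<Sum>k\<in>F. \<phi> \<bar>a k\<bar>)" by auto
  obtain k where k: "k \<notin> F" "\<And>j. j \<notin> F \<Longrightarrow> \<bar>a j\<bar> \<le> \<bar>a k\<bar>"
    using ex_max_abs_outside_finite[OF F(1) levels] by auto
  have "{j. \<bar>a j\<bar> > \<bar>a k\<bar>} \<subseteq> F" using k(2) by force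
  then have "rearr a (Suc n) \<le> \<bar>a k\<bar>"
    using F(1,2) card_mono[OF F(1)] by (intro rearr_le) (auto simp: finite_subset le_imp_less_Suc)
  then have "\<phi> (rearr a (Suc n)) \<le> \<phi> \<bar>a k\<bar>"
    using rearr_nonneg[OF bd, of "Suc n"] by (intro mono_onD[OF mono]) auto
  with F k(1) show ?case
    by (intro exI[of _ "insert k F"]) (simp add: add.commute[of "\<phi> \<bar>a k\<bar>"] add_mono)
qed

lemma sum_le_dyadic_condensation:
  fixes g :: "nat \<Rightarrow> 'a::linordered_nonzero_semiring"
  assumes antimono: "\<And>m n. 1 \<le> m \<Longrightarrow> m \<le> n \<Longrightarrow> g n \<le> g m"
  shows "(\<Sum>n=1..<2^J. g n) \<le> (\<Sum>j<J. 2^j * g (2^j))"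
proof (induction J)
  case 0
  then show ?case by simp
next
  case (Suc J)
  have "(\<Sum>n=1..<2^Suc J. g n) = (\<Sum>n=1..<2^J. g n) + (\<Sum>n=2^J..<2^Suc J. g n)"
    by (rule sum.atLeastLessThan_concat[symmetric]) auto
  also have "\<dots> \<le> (\<Sum>j<J. 2^j * g (2^j)) + 2^J * g (2^J)"
  proof (rule add_mono[OF Suc.IH])
    have "(\<Sum>n=2^J..<2^Suc J. g n) \<le> of_nat (card {2^J..<(2::nat)^Suc J}) * g (2^J)"
      by (rule sum_bounded_above) (auto intro: antimono)
    then show "(\<Sum>n=2^J..<2^Suc J. g n) \<le> 2^J * g (2^J)" by simp
  qed
  finally show ?case by simp
qed

lemma dyadic_condensation_le_sum:
  fixes g :: "nat \<Rightarrow> 'a::linordered_nonzero_semiring"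
  assumes antimono: "\<And>m n. 1 \<le> m \<Longrightarrow> m \<le> n \<Longrightarrow> g n \<le> g m"
    and nonneg: "\<And>n. 1 \<le> n \<Longrightarrow> 0 \<le> g n"
  shows "(\<Sum>j\<le>J. 2^j * g (2^j)) \<le> 2 * (\<Sum>n=1..2^J. g n)"
proof (induction J)
  case 0
  then show ?case using nonneg[of 1] by (simp add: mult_2 add_increasing)
next
  case (Suc J)
  have "(\<Sum>j\<le>Suc J. 2^j * g (2^j)) = (\<Sum>j\<le>J. 2^j * g (2^j)) + 2 * (2^J * g (2^Suc J))"
    by (simp add: mult.assoc)
  also have "\<dots> \<le> 2 * (\<Sum>n=1..2^J. g n) + 2 * (\<Sum>n=Suc (2^J)..2^Suc J. g n)"
  proof (intro add_mono[OF Suc.IH] mult_left_mono)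
    have "of_nat (card {Suc (2^J)..(2::nat)^Suc J}) * g (2^Suc J) \<le> (\<Sum>n=Suc (2^J)..2^Suc J. g n)"
      by (rule sum_bounded_below) (auto intro: antimono)
    then show "2^J * g (2^Suc J) \<le> (\<Sum>n=Suc (2^J)..2^Suc J. g n)" by simp
  qed simp
  also have "\<dots> = 2 * (\<Sum>n\<in>{1..2^J} \<union> {Suc (2^J)..2^Suc J}. g n)"
    by (simp add: distrib_left sum.union_disjoint)
  also have "{1..2^J} \<union> {Suc (2^J)..2^Suc J} = {1..(2::nat)^Suc J}"
    by auto
  finally show ?case .
qed

lemma antimono_comp_rearr:
  assumes "mono_on {0..} \<phi>" "bounded (range a)" "1 \<le> m" "m \<le> n"
  shows "\<phi> (rearr a n) \<le> \<phi> (rearr a m)"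
  using rearr_antimono[OF assms(2-4)] rearr_nonneg[OF assms(2), of n] assms(3,4)
  by (intro mono_onD[OF assms(1)]) auto

lemma finite_level_sets_if_suminf_finite:
  fixes \<phi> :: "real \<Rightarrow> ennreal"
  assumes mono: "mono_on {0..} \<phi>" and pos: "\<And>t. t > 0 \<Longrightarrow> \<phi> t > 0"
    and finite_sum: "(\<Sum>k. \<phi> \<bar>a k\<bar>) < \<infinity>" and "t > 0"
  shows "finite {k. \<bar>a k\<bar> > t}"
proof (rule ccontr)
  assume infinite: "infinite {k. \<bar>a k\<bar> > t}"
  have "of_nat n * \<phi> t \<le> (\<Sum>k. \<phi> \<bar>a k\<bar>)" for n
  proof -
    obtain B where B: "finite B" "card B = n" "B \<subseteq> {k. \<bar>a k\<bar> > t}"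
      using infinite_arbitrarily_large[OF infinite] by blast
    have "of_nat n * \<phi> t \<le> (\<Sum>k\<in>B. \<phi> \<bar>a k\<bar>)"
      unfolding B(2)[symmetric] using B(3) \<open>t > 0\<close>
      by (intro sum_bounded_below mono_onD[OF mono]) auto
    also have "\<dots> \<le> (\<Sum>k. \<phi> \<bar>a k\<bar>)"
      using B(1) by (intro sum_le_suminf summableI) auto
    finally show ?thesis .
  qed
  then have "(SUP n. of_nat n) * \<phi> t \<le> (\<Sum>k. \<phi> \<bar>a k\<bar>)"
    by (simp add: SUP_mult_right_ennreal SUP_least)
  then show False
    using finite_sum pos[OF \<open>t > 0\<close>]
    by (auto simp: ennreal_SUP_of_nat_eq_top ennreal_top_mult top_unique split: if_splits)
qed

lemma suminf_le_dyadic_rearr: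
  fixes \<phi> :: "real \<Rightarrow> ennreal"
  assumes mono: "mono_on {0..} \<phi>" and bd: "bounded (range a)"
  shows "(\<Sum>k. \<phi> \<bar>a k\<bar>) \<le> (\<Sum>j. 2^j * \<phi> (rearr a (2^j)))"
  unfolding suminf_eq_SUP[of "\<lambda>k. \<phi> \<bar>a k\<bar>"]
proof (rule SUP_least)
  fix M :: nat
  have "(\<Sum>k<M. \<phi> \<bar>a k\<bar>) \<le> (\<Sum>i=1..M. \<phi> (rearr a i))"
    using sum_le_sum_rearr[OF mono bd, of "{..<M}"] by simp
  also have "\<dots> \<le> (\<Sum>i=1..<2^M. \<phi> (rearr a i))"
    by (intro sum_mono2) (auto intro: le_less_trans[OF _ less_exp])
  also have "\<dots> \<le> (\<Sum>j<M. 2^j * \<phi> (rearr a (2^j)))"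
    by (intro sum_le_dyadic_condensation antimono_comp_rearr[OF mono bd])
  also have "\<dots> \<le> (\<Sum>j. 2^j * \<phi> (rearr a (2^j)))"
    by (intro sum_le_suminf summableI) auto
  finally show "(\<Sum>k<M. \<phi> \<bar>a k\<bar>) \<le> (\<Sum>j. 2^j * \<phi> (rearr a (2^j)))" .
qed

lemma dyadic_rearr_le_suminf:
  fixes \<phi> :: "real \<Rightarrow> ennreal"
  assumes mono: "mono_on {0..} \<phi>" and pos: "\<And>t. t > 0 \<Longrightarrow> \<phi> t > 0"
    and bd: "bounded (range a)"
  shows "(\<Sum>j. 2^j * \<phi> (rearr a (2^j))) \<le> 2 * (\<Sum>k. \<phi> \<bar>a k\<bar>)"
proof (cases "(\<Sum>k. \<phi> \<bar>a k\<bar>) = \<infinity>")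
  case True
  then show ?thesis by (simp add: ennreal_mult_top)
next
  case False
  then have levels: "finite {k. \<bar>a k\<bar> > t}" if "t > 0" for t
    using finite_level_sets_if_suminf_finite[OF mono pos _ that] by (simp add: less_top)
  show ?thesis
    unfolding suminf_eq_SUP[of "\<lambda>j. 2^j * \<phi> (rearr a (2^j))"]
  proof (rule SUP_least)
    fix M :: nat
    obtain F where F: "finite F" "(\<Sum>i=1..2^M. \<phi> (rearr a i)) \<le> (\<Sum>k\<in>F. \<phi> \<bar>a k\<bar>)"
      using ex_sum_rearr_le_sum[OF mono bd levels] by blast
    have "(\<Sum>j<M. 2^j * \<phi> (rearr a (2^j))) \<le> (\<Sum>j\<le>M. 2^j * \<phi> (rearr a (2^j)))"
      by (intro sum_mono2) auto
    also have "\<dots> \<le> 2 * (\<Sum>i=1..2^M. \<phi> (rearr a i))"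
      by (intro dyadic_condensation_le_sum antimono_comp_rearr[OF mono bd]) auto
    also have "\<dots> \<le> 2 * (\<Sum>k. \<phi> \<bar>a k\<bar>)"
      using F by (intro mult_left_mono order_trans[OF F(2)] sum_le_suminf summableI) auto
    finally show "(\<Sum>j<M. 2^j * \<phi> (rearr a (2^j))) \<le> 2 * (\<Sum>k. \<phi> \<bar>a k\<bar>)" .
  qed
qed

lemma convex_on_scale_le:
  fixes N :: "real \<Rightarrow> real"
  assumes "convex_on {0..} N" "N 0 = 0" "x \<ge> 0" "0 \<le> \<theta>" "\<theta> \<le> 1"
  shows "N (\<theta> * x) \<le> \<theta> * N x"
  using convex_onD[OF assms(1), of \<theta> 0 x] assms(2-5) by simp

lemma mono_on_ennreal_dilation:
  fixes N :: "real \<Rightarrow> real"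
  assumes "mono_on {0..} N" "u > 0"
  shows "mono_on {0..} (\<lambda>x. ennreal (N (x / u)))"
  using assms by (auto intro!: mono_onI ennreal_leI mono_onD[OF assms(1)] divide_right_mono)

lemma ennreal_power_two_mult: "ennreal (2^j * x) = 2^j * ennreal x"
  by (simp add: ennreal_mult' ennreal_power[symmetric])

lemma Inf_ennreal_scaled_le:
  fixes P Q :: "real \<Rightarrow> bool"
  assumes "c > 0" and scale: "\<And>u. u > 0 \<Longrightarrow> P u \<Longrightarrow> Q (c * u)"
  shows "Inf {ennreal u |u. u > 0 \<and> Q u} \<le> ennreal c * Inf {ennreal u |u. u > 0 \<and> P u}"
proof (cases "{ennreal u |u. u > 0 \<and> P u} = {}")
  case True
  then show ?thesis unfolding True using \<open>c > 0\<close> by (simp add: ennreal_mult_top)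
next
  case False
  let ?S = "{ennreal u |u. u > 0 \<and> P u}"
  have "ennreal c * Inf ?S = Inf ((*) (ennreal c) ` ?S)"
  proof (rule continuous_at_Inf_mono)
    show "mono ((*) (ennreal c))" by (auto simp: mono_def mult_left_mono)
    show "continuous (at_right (Inf ?S)) ((*) (ennreal c))"
      unfolding continuous_within by (intro ennreal_tendsto_cmult tendsto_ident_at) auto
  qed (use False in auto)
  moreover have "Inf {ennreal u |u. u > 0 \<and> Q u} \<le> Inf ((*) (ennreal c) ` ?S)"
  proof (rule Inf_greatest, safe)
    fix u assume "u > 0" "P u"
    then have "ennreal (c * u) \<in> {ennreal u |u. u > 0 \<and> Q u}" using \<open>c > 0\<close> scale by auto
    then have "Inf {ennreal u |u. u > 0 \<and> Q u} \<le> ennreal (c * u)" by (rule Inf_lower)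
    then show "Inf {ennreal u |u. u > 0 \<and> Q u} \<le> ennreal c * ennreal u"
      using \<open>c > 0\<close> \<open>u > 0\<close> by (simp add: ennreal_mult)
  qed
  ultimately show ?thesis by simp
qed

lemma lN_norm_le_UN_norm_rearr:
  assumes mono: "mono_on {0..} N" and bd: "bounded (range a)"
  shows "lN_norm N a \<le> UN_norm N (\<lambda>j. rearr a (2^j))"
proof -
  have "lN_norm N a \<le> ennreal 1 * UN_norm N (\<lambda>j. rearr a (2^j))"
    unfolding lN_norm_def UN_norm_def
  proof (rule Inf_ennreal_scaled_le)
    fix u :: real
    assume "u > 0" and le1: "(\<Sum>j. ennreal (2^j * N (\<bar>rearr a (2^j)\<bar> / u))) \<le> 1"
    have "(\<Sum>k. ennreal (N (\<bar>a k\<bar> / u))) \<le> (\<Sum>j. 2^j * ennreal (N (rearr a (2^j) / u)))"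
      by (rule suminf_le_dyadic_rearr[OF mono_on_ennreal_dilation[OF mono \<open>u > 0\<close>] bd])
    also have "\<dots> \<le> 1"
      using le1 rearr_nonneg[OF bd] by (simp add: ennreal_power_two_mult)
    finally show "(\<Sum>k. ennreal (N (\<bar>a k\<bar> / (1 * u)))) \<le> 1" by simp
  qed simp
  then show ?thesis by simp
qed

lemma UN_norm_rearr_le_lN_norm:
  assumes mono: "mono_on {0..} N" and cvx: "convex_on {0..} N" and "N 0 = 0"
    and pos: "\<And>t. t > 0 \<Longrightarrow> N t > 0" and bd: "bounded (range a)"
  shows "UN_norm N (\<lambda>j. rearr a (2^j)) \<le> 2 * lN_norm N a"
proof -
  have "UN_norm N (\<lambda>j. rearr a (2^j)) \<le> ennreal 2 * lN_norm N a"
    unfolding lN_norm_def UN_norm_def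
  proof (rule Inf_ennreal_scaled_le)
    fix u :: real
    assume "u > 0" and le1: "(\<Sum>k. ennreal (N (\<bar>a k\<bar> / u))) \<le> 1"
    let ?\<phi> = "\<lambda>x. ennreal (N (x / u))"
    have halve: "2 * ennreal (N (rearr a (2^j) / (2 * u))) \<le> ?\<phi> (rearr a (2^j))" for j
    proof -
      have "N (1/2 * (rearr a (2^j) / u)) \<le> 1/2 * N (rearr a (2^j) / u)"
        using rearr_nonneg[OF bd, of "2^j"] \<open>u > 0\<close>
        by (intro convex_on_scale_le[OF cvx \<open>N 0 = 0\<close>]) auto
      then have "ennreal (2 * N (rearr a (2^j) / (2 * u))) \<le> ?\<phi> (rearr a (2^j))"
        by (intro ennreal_leI) (simp add: mult.commute)
      then show ?thesis by (simp add: ennreal_mult')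
    qed
    have "2 * (\<Sum>j. ennreal (2^j * N (\<bar>rearr a (2^j)\<bar> / (2 * u))))
        = (\<Sum>j. 2^j * (2 * ennreal (N (rearr a (2^j) / (2 * u)))))"
      using rearr_nonneg[OF bd] by (simp add: ennreal_power_two_mult mult.left_commute)
    also have "\<dots> \<le> (\<Sum>j. 2^j * ?\<phi> (rearr a (2^j)))"
      by (intro suminf_le summableI mult_left_mono halve) auto
    also have "\<dots> \<le> 2 * (\<Sum>k. ?\<phi> \<bar>a k\<bar>)"
      using \<open>u > 0\<close> pos
      by (intro dyadic_rearr_le_suminf[OF mono_on_ennreal_dilation[OF mono \<open>u > 0\<close>] _ bd]) simp
    also have "\<dots> \<le> 2 * 1"
      using le1 by (intro mult_left_mono) auto
    finally show "(\<Sum>j. ennreal (2^j * N (\<bar>rearr a (2^j)\<bar> / (2 * u)))) \<le> 1"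
      by (subst (asm) ennreal_mult_le_mult_iff) auto
  qed simp
  then show ?thesis by simp
qed

lemma blk_eq_floor_log: "blk m = floor_log (Suc m)"
  unfolding blk_def
proof (rule the_equality)
  show "2 ^ floor_log (Suc m) \<le> m + 1 \<and> m + 1 < 2 ^ (floor_log (Suc m) + 1)"
    using floor_log_exp2_le[of "Suc m"] floor_log_exp2_gt[of "Suc m"] by simp
next
  fix j assume "2 ^ j \<le> m + 1 \<and> m + 1 < (2::nat) ^ (j + 1)"
  then show "j = floor_log (Suc m)" by (intro floor_log_eqI[symmetric]) auto
qed

lemma sum_blk:
  fixes h :: "nat \<Rightarrow> 'a::comm_semiring_1"
  shows "(\<Sum>m<2^J - 1. h (blk m)) = (\<Sum>j<J. 2^j * h j)"
proof (induction J)
  case 0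
  then show ?case by simp
next
  case (Suc J)
  have "(\<Sum>m<2^Suc J - 1. h (blk m)) = (\<Sum>m<2^J - 1. h (blk m)) + (\<Sum>m=2^J - 1..<2^Suc J - 1. h (blk m))"
    unfolding lessThan_atLeast0 by (rule sum.atLeastLessThan_concat[symmetric]) auto
  also have "(\<Sum>m=2^J - 1..<2^Suc J - 1. h (blk m)) = (\<Sum>m=(2::nat)^J - 1..<2^Suc J - 1. h J)"
  proof (rule sum.cong)
    fix m assume "m \<in> {(2::nat)^J - 1..<2^Suc J - 1}"
    moreover have "(1::nat) \<le> 2^J" by simp
    ultimately have "2^J \<le> Suc m" "Suc m < 2 * 2^J" by auto
    then show "h (blk m) = h J" by (simp add: blk_eq_floor_log floor_log_eqI)
  qed simp
  also have "\<dots> = 2^J * h J"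
    by simp
  finally show ?case using Suc.IH by simp
qed

lemma suminf_blk:
  fixes h :: "nat \<Rightarrow> ennreal"
  shows "(\<Sum>m. h (blk m)) = (\<Sum>j. 2^j * h j)"
proof -
  have "strict_mono (\<lambda>J::nat. 2^J - 1 :: nat)"
    by (rule strict_monoI_Suc) (simp add: diff_less_mono)
  then have "(\<lambda>J. \<Sum>m<2^J - 1. h (blk m)) \<longlonglongrightarrow> (\<Sum>m. h (blk m))"
    using LIMSEQ_subseq_LIMSEQ[OF summable_LIMSEQ[OF summableI]] by (simp add: o_def)
  then have "(\<lambda>J. \<Sum>j<J. 2^j * h j) \<longlonglongrightarrow> (\<Sum>m. h (blk m))"
    by (simp only: sum_blk)
  moreover have "(\<lambda>J. \<Sum>j<J. 2^j * h j) \<longlonglongrightarrow> (\<Sum>j. 2^j * h j)"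
    by (rule summable_LIMSEQ[OF summableI])
  ultimately show ?thesis by (rule LIMSEQ_unique)
qed

lemma E_lN_norm_eq_UN_norm: "E_lN_norm N a = UN_norm N a"
proof -
  have "(\<Sum>m. ennreal (N (\<bar>a (blk m)\<bar> / u))) = (\<Sum>j. ennreal (2^j * N (\<bar>a j\<bar> / u)))" for u
    using suminf_blk[of "\<lambda>j. ennreal (N (\<bar>a j\<bar> / u))"] by (simp add: ennreal_power_two_mult)
  then show ?thesis unfolding E_lN_norm_def lN_norm_def UN_norm_def by simp
qed

theorem mainTheorem18:
  fixes N :: "real \<Rightarrow> real"
  assumes "orlicz_function N" and "N 1 = 1" and "delta2_zero N"
  shows "(\<forall>a :: nat \<Rightarrow> real. bounded (range a) \<longrightarrow>
            lN_norm N a \<le> UN_norm N (\<lambda>j. rearr a (2 ^ j)) \<and>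
            UN_norm N (\<lambda>j. rearr a (2 ^ j)) \<le> 4 * lN_norm N a)
       \<and> (\<exists>C :: real. C > 0 \<and> (\<forall>a :: nat \<Rightarrow> real.
            E_lN_norm N a \<le> ennreal C * UN_norm N a \<and>
            UN_norm N a \<le> ennreal C * E_lN_norm N a))"
proof -
  have mono: "mono_on {0..} N" and cvx: "convex_on {0..} N" and "N 0 = 0"
    using assms(1) unfolding orlicz_function_def by auto
  have pos: "\<And>t. t > 0 \<Longrightarrow> N t > 0"
    using assms(3) unfolding delta2_zero_def by auto
  have "UN_norm N (\<lambda>j. rearr a (2 ^ j)) \<le> 4 * lN_norm N a" if "bounded (range a)" for a
  proof -
    have "UN_norm N (\<lambda>j. rearr a (2 ^ j)) \<le> 2 * lN_norm N a"
      by (rule UN_norm_rearr_le_lN_norm[OF mono cvx \<open>N 0 = 0\<close> pos that])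
    also have "\<dots> \<le> 4 * lN_norm N a" by (intro mult_right_mono) auto
    finally show ?thesis .
  qed
  then show ?thesis
    using lN_norm_le_UN_norm_rearr[OF mono] E_lN_norm_eq_UN_norm
    by (intro conjI allI impI exI[of _ 1]) auto
qed

end
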